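(* Let $P$ and $Q$ be unital associative algebras over a field $k$ and let $\varphi\colon Q\to P$ be a morphism of unital algebras. Let $Z:=P\oplus Q$ be the mapping cylinder algebra (defined in the context). Let $X$ be a right $P$-module and $Y$ a left $P$-module, regarded as a right, resp. left, $Z$-module via $x\triangleleft(p,q):=x\triangleleft p+x\triangleleft\varphi(q)$ and $(p,q)\triangleright y:=p\triangleright y+\varphi(q)\triangleright y$. Then ${\rm Tor}^Z_n(X,Y)\cong{\rm Tor}^P_n(X,Y)$ for all $n\geq 0$.
   Context: All algebras are unital associative $k$-algebras and tensor products are over $k$. The mapping cylinder algebra of $\varphi\colon Q\to P$ is the vector space $Z=P\oplus Q$ with multiplication $(p,q)\cdot(p',q')=(pp'+p\varphi(q')+\varphi(q)p',\,qq')$ and unit $(0,1)$; $P$ is a two-sided ideal in $Z$. *)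

theory Defs
  imports Complex_Main
begin

definition is_k_algebra :: "('k::field \<Rightarrow> 'a::ring_1 \<Rightarrow> 'a) \<Rightarrow> bool" where
  "is_k_algebra s \<longleftrightarrow> vector_space s \<and>
     (\<forall>c a b. s c (a * b) = s c a * b \<and> s c (a * b) = a * s c b)"

definition is_unital_alg_hom ::
  "('k::field \<Rightarrow> 'q::ring_1 \<Rightarrow> 'q) \<Rightarrow> ('k \<Rightarrow> 'p::ring_1 \<Rightarrow> 'p) \<Rightarrow> ('q \<Rightarrow> 'p) \<Rightarrow> bool" where
  "is_unital_alg_hom sQ sP \<phi> \<longleftrightarrow> \<phi> 1 = 1 \<and>
     (\<forall>a b. \<phi> (a * b) = \<phi> a * \<phi> b) \<and> (\<forall>a b. \<phi> (a + b) = \<phi> a + \<phi> b) \<and>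
     (\<forall>c a. \<phi> (sQ c a) = sP c (\<phi> a))"

text \<open>Right / left modules over the ring P (the k-structure is induced via k -> P).\<close>
definition is_right_module :: "('x::ab_group_add \<Rightarrow> 'p::ring_1 \<Rightarrow> 'x) \<Rightarrow> bool" where
  "is_right_module act \<longleftrightarrow> (\<forall>x. act x 1 = x) \<and> (\<forall>x a b. act x (a * b) = act (act x a) b) \<and>
     (\<forall>x x' a. act (x + x') a = act x a + act x' a) \<and> (\<forall>x a b. act x (a + b) = act x a + act x b)"

definition is_left_module :: "('p::ring_1 \<Rightarrow> 'y::ab_group_add \<Rightarrow> 'y) \<Rightarrow> bool" where
  "is_left_module act \<longleftrightarrow> (\<forall>y. act 1 y = y) \<and> (\<forall>y a b. act (a * b) y = act a (act b y)) \<and>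
     (\<forall>y y' a. act a (y + y') = act a y + act a y') \<and> (\<forall>y a b. act (a + b) y = act a y + act b y)"

definition cyl_add :: "'p::ring_1 \<times> 'q::ring_1 \<Rightarrow> 'p \<times> 'q \<Rightarrow> 'p \<times> 'q" where
  "cyl_add z z' = (fst z + fst z', snd z + snd z')"

definition cyl_mult :: "('q::ring_1 \<Rightarrow> 'p::ring_1) \<Rightarrow> 'p \<times> 'q \<Rightarrow> 'p \<times> 'q \<Rightarrow> 'p \<times> 'q" where
  "cyl_mult \<phi> z z' = (fst z * fst z' + fst z * \<phi> (snd z') + \<phi> (snd z) * fst z', snd z * snd z')"

definition cyl_one :: "'p::ring_1 \<times> 'q::ring_1" where
  "cyl_one = (0, 1)"

definition cyl_scale :: "('k \<Rightarrow> 'p \<Rightarrow> 'p) \<Rightarrow> ('k \<Rightarrow> 'q \<Rightarrow> 'q) \<Rightarrow> 'k \<Rightarrow> 'p \<times> 'q \<Rightarrow> 'p \<times> 'q" where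
  "cyl_scale sP sQ c z = (sP c (fst z), sQ c (snd z))"

definition cyl_ract :: "('q \<Rightarrow> 'p) \<Rightarrow> ('x::ab_group_add \<Rightarrow> 'p \<Rightarrow> 'x) \<Rightarrow> 'x \<Rightarrow> 'p \<times> 'q \<Rightarrow> 'x" where
  "cyl_ract \<phi> act x z = act x (fst z) + act x (\<phi> (snd z))"

definition cyl_lact :: "('q \<Rightarrow> 'p) \<Rightarrow> ('p \<Rightarrow> 'y::ab_group_add \<Rightarrow> 'y) \<Rightarrow> 'p \<times> 'q \<Rightarrow> 'y \<Rightarrow> 'y" where
  "cyl_lact \<phi> act z y = act (fst z) y + act (\<phi> (snd z)) y"

text \<open>Chains of degree n: finitely supported k-valued functions on tuples (x, [a1..an], y),
 i.e. the free k-vector space on X x A^n x Y; the tensor product over k is its quotient by the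
 span of the multilinearity relations.\<close>

definition kdelta :: "'b \<Rightarrow> 'b \<Rightarrow> 'k::zero_neq_one" where
  "kdelta b = (\<lambda>g. if g = b then 1 else 0)"

inductive_set kspan :: "('b \<Rightarrow> 'k::field) set \<Rightarrow> ('b \<Rightarrow> 'k) set" for S where
  zero: "(\<lambda>_. 0) \<in> kspan S"
| step: "s \<in> S \<Longrightarrow> t \<in> kspan S \<Longrightarrow> (\<lambda>g. c * s g + t g) \<in> kspan S"

definition bar_chains :: "nat \<Rightarrow> ('x \<times> 'a list \<times> 'y \<Rightarrow> 'k::zero) set" where
  "bar_chains n = {f. finite {g. f g \<noteq> 0} \<and> (\<forall>x as y. f (x, as, y) \<noteq> 0 \<longrightarrow> length as = n)}"

definition bar_rel_gens ::
  "('a \<Rightarrow> 'a \<Rightarrow> 'a) \<Rightarrow> ('k::field \<Rightarrow> 'a \<Rightarrow> 'a) \<Rightarrow> 'a \<Rightarrow> ('x::ab_group_add \<Rightarrow> 'a \<Rightarrow> 'x)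
    \<Rightarrow> ('a \<Rightarrow> 'y::ab_group_add \<Rightarrow> 'y) \<Rightarrow> nat \<Rightarrow> ('x \<times> 'a list \<times> 'y \<Rightarrow> 'k) set" where
  "bar_rel_gens addA sA oneA actX actY n =
     {\<lambda>g. kdelta (x + x', as, y) g - kdelta (x, as, y) g - kdelta (x', as, y) g
        | x x' as y. length as = n}
   \<union> {\<lambda>g. kdelta (actX x (sA c oneA), as, y) g - c * kdelta (x, as, y) g
        | x c as y. length as = n}
   \<union> {\<lambda>g. kdelta (x, as[i := addA a a'], y) g - kdelta (x, as[i := a], y) g
              - kdelta (x, as[i := a'], y) g
        | x as y i a a'. length as = n \<and> i < n}
   \<union> {\<lambda>g. kdelta (x, as[i := sA c a], y) g - c * kdelta (x, as[i := a], y) g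
        | x as y i a c. length as = n \<and> i < n}
   \<union> {\<lambda>g. kdelta (x, as, y + y') g - kdelta (x, as, y) g - kdelta (x, as, y') g
        | x as y y'. length as = n}
   \<union> {\<lambda>g. kdelta (x, as, actY (sA c oneA) y) g - c * kdelta (x, as, y) g
        | x c as y. length as = n}"

definition bar_d_basis ::
  "('a \<Rightarrow> 'a \<Rightarrow> 'a) \<Rightarrow> ('x \<Rightarrow> 'a \<Rightarrow> 'x) \<Rightarrow> ('a \<Rightarrow> 'y \<Rightarrow> 'y)
    \<Rightarrow> 'x \<times> 'a list \<times> 'y \<Rightarrow> 'x \<times> 'a list \<times> 'y \<Rightarrow> 'k::field" where
  "bar_d_basis multA actX actY t = (case t of (x, as, y) \<Rightarrow>
     if as = [] then (\<lambda>_. 0) else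
     (\<lambda>g. kdelta (actX x (hd as), tl as, y) g
        + (\<Sum>i < length as - 1. (-1) ^ (i + 1) *
             kdelta (x, take i as @ [multA (as ! i) (as ! (i + 1))] @ drop (i + 2) as, y) g)
        + (-1) ^ length as * kdelta (x, butlast as, actY (last as) y) g))"

definition lin_ext :: "('b \<Rightarrow> 'c \<Rightarrow> 'k::comm_ring_1) \<Rightarrow> ('b \<Rightarrow> 'k) \<Rightarrow> 'c \<Rightarrow> 'k" where
  "lin_ext T f = (\<lambda>c. \<Sum>b \<in> {b. f b \<noteq> 0}. f b * T b c)"

definition bar_cycles ::
  "('a \<Rightarrow> 'a \<Rightarrow> 'a) \<Rightarrow> ('a \<Rightarrow> 'a \<Rightarrow> 'a) \<Rightarrow> ('k::field \<Rightarrow> 'a \<Rightarrow> 'a) \<Rightarrow> 'a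
    \<Rightarrow> ('x::ab_group_add \<Rightarrow> 'a \<Rightarrow> 'x) \<Rightarrow> ('a \<Rightarrow> 'y::ab_group_add \<Rightarrow> 'y) \<Rightarrow> nat
    \<Rightarrow> ('x \<times> 'a list \<times> 'y \<Rightarrow> 'k) set" where
  "bar_cycles addA multA sA oneA actX actY n =
     {f \<in> bar_chains n. (case n of 0 \<Rightarrow> True
        | Suc m \<Rightarrow> lin_ext (bar_d_basis multA actX actY) f \<in> kspan (bar_rel_gens addA sA oneA actX actY m))}"

definition bar_boundaries ::
  "('a \<Rightarrow> 'a \<Rightarrow> 'a) \<Rightarrow> ('a \<Rightarrow> 'a \<Rightarrow> 'a) \<Rightarrow> ('k::field \<Rightarrow> 'a \<Rightarrow> 'a) \<Rightarrow> 'a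
    \<Rightarrow> ('x::ab_group_add \<Rightarrow> 'a \<Rightarrow> 'x) \<Rightarrow> ('a \<Rightarrow> 'y::ab_group_add \<Rightarrow> 'y) \<Rightarrow> nat
    \<Rightarrow> ('x \<times> 'a list \<times> 'y \<Rightarrow> 'k) set" where
  "bar_boundaries addA multA sA oneA actX actY n =
     {\<lambda>g. lin_ext (bar_d_basis multA actX actY) h g + r g
        | h r. h \<in> bar_chains (Suc n) \<and> r \<in> kspan (bar_rel_gens addA sA oneA actX actY n)}"

text \<open>k-linear isomorphism between quotient spaces Z1/B1 and Z2/B2 (given by a k-linear map
 Z1 -> Z2 respecting the subspaces and inducing a bijection of the quotients).\<close>
definition quot_iso ::
  "('b \<Rightarrow> 'k::field) set \<Rightarrow> ('b \<Rightarrow> 'k) set \<Rightarrow> ('c \<Rightarrow> 'k) set \<Rightarrow> ('c \<Rightarrow> 'k) set \<Rightarrow> bool" where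
  "quot_iso Z1 B1 Z2 B2 \<longleftrightarrow> (\<exists>h.
     (\<forall>u\<in>Z1. \<forall>v\<in>Z1. h (\<lambda>g. u g + v g) = (\<lambda>g'. h u g' + h v g')) \<and>
     (\<forall>c. \<forall>u\<in>Z1. h (\<lambda>g. c * u g) = (\<lambda>g'. c * h u g')) \<and>
     h ` Z1 \<subseteq> Z2 \<and> h ` B1 \<subseteq> B2 \<and>
     (\<forall>z\<in>Z2. \<exists>w\<in>Z1. (\<lambda>g. z g - h w g) \<in> B2) \<and>
     (\<forall>w\<in>Z1. h w \<in> B2 \<longrightarrow> w \<in> B1))"

definition Tor_iso ::
  "('a \<Rightarrow> 'a \<Rightarrow> 'a) \<Rightarrow> ('a \<Rightarrow> 'a \<Rightarrow> 'a) \<Rightarrow> ('k::field \<Rightarrow> 'a \<Rightarrow> 'a) \<Rightarrow> 'a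
    \<Rightarrow> ('x::ab_group_add \<Rightarrow> 'a \<Rightarrow> 'x) \<Rightarrow> ('a \<Rightarrow> 'y::ab_group_add \<Rightarrow> 'y)
    \<Rightarrow> ('b \<Rightarrow> 'b \<Rightarrow> 'b) \<Rightarrow> ('b \<Rightarrow> 'b \<Rightarrow> 'b) \<Rightarrow> ('k \<Rightarrow> 'b \<Rightarrow> 'b) \<Rightarrow> 'b
    \<Rightarrow> ('x \<Rightarrow> 'b \<Rightarrow> 'x) \<Rightarrow> ('b \<Rightarrow> 'y \<Rightarrow> 'y) \<Rightarrow> nat \<Rightarrow> bool" where
  "Tor_iso addA multA sA oneA actXA actYA addB multB sB oneB actXB actYB n \<longleftrightarrow>
     quot_iso (bar_cycles addA multA sA oneA actXA actYA n :: ('x \<times> 'a list \<times> 'y \<Rightarrow> 'k) set)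
              (bar_boundaries addA multA sA oneA actXA actYA n)
              (bar_cycles addB multB sB oneB actXB actYB n :: ('x \<times> 'b list \<times> 'y \<Rightarrow> 'k) set)
              (bar_boundaries addB multB sB oneB actXB actYB n)"

end

theory Submission
  imports Defs
begin

text \<open>The projection \<open>\<pi> (p, q) = p + \<phi> q\<close> is a unital algebra map from the cylinder onto \<open>P\<close>
  through which the actions on \<open>X\<close> and \<open>Y\<close> factor, and \<open>\<iota> p = (p, 0)\<close> is a multiplicative but
  non-unital section of it. On bar complexes \<open>\<pi>\<^sub>* \<iota>\<^sub>* = id\<close>, while \<open>\<iota>\<^sub>* \<pi>\<^sub>*\<close> is homotopic to
  the identity: \<open>u = (1, 0)\<close> satisfies \<open>u z = \<iota> (\<pi> z)\<close> and \<open>\<iota> p u = \<iota> p\<close> and acts trivially on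
  \<open>X\<close> and \<open>Y\<close>, so the alternating sum over \<open>i\<close> of the operators that insert \<open>u\<close> after the first
  \<open>i\<close> letters and apply \<open>\<iota> \<circ> \<pi>\<close> to those letters is a contracting homotopy for
  \<open>id - \<iota>\<^sub>* \<pi>\<^sub>*\<close>. Hence \<open>\<pi>\<^sub>*\<close> induces isomorphisms on the homology of the bar complexes.\<close>

section \<open>Finitely supported functions and linear extension\<close>

definition support :: "('b \<Rightarrow> 'k::zero) \<Rightarrow> 'b set" where
  "support f = {b. f b \<noteq> 0}"

abbreviation finsupp :: "('b \<Rightarrow> 'k::zero) \<Rightarrow> bool" where
  "finsupp f \<equiv> finite (support f)"

lemma finsupp_zero: "finsupp (\<lambda>_. 0)"
  by (simp add: support_def)

lemma finsupp_kdelta: "finsupp (kdelta b)"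
  by (rule finite_subset[of _ "{b}"]) (auto simp: support_def kdelta_def)

lemma finsupp_add: "finsupp f \<Longrightarrow> finsupp g \<Longrightarrow> finsupp (\<lambda>b. f b + (g b :: 'k::monoid_add))"
  by (rule finite_subset[of _ "support f \<union> support g"]) (auto simp: support_def)

lemma finsupp_diff: "finsupp f \<Longrightarrow> finsupp g \<Longrightarrow> finsupp (\<lambda>b. f b - (g b :: 'k::ab_group_add))"
  by (rule finite_subset[of _ "support f \<union> support g"]) (auto simp: support_def)

lemma finsupp_scale: "finsupp f \<Longrightarrow> finsupp (\<lambda>b. a * (f b :: 'k::mult_zero))"
  by (rule finite_subset[of _ "support f"]) (auto simp: support_def)

lemma finsupp_sum:
  "finite I \<Longrightarrow> (\<And>i. i \<in> I \<Longrightarrow> finsupp (f i))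
    \<Longrightarrow> finsupp (\<lambda>b. \<Sum>i\<in>I. (f i b :: 'k::comm_monoid_add))"
proof (induction I rule: finite_induct)
  case (insert i I)
  then have "finsupp (\<lambda>b. f i b + (\<Sum>i\<in>I. f i b))"
    by (intro finsupp_add) auto
  with insert show ?case by simp
qed (simp add: support_def)

lemma lin_ext_eq_sum:
  "finite S \<Longrightarrow> support f \<subseteq> S \<Longrightarrow> lin_ext T f c = (\<Sum>b\<in>S. f b * T b c)"
  unfolding lin_ext_def support_def by (rule sum.mono_neutral_left) auto

lemma lin_ext_zero: "lin_ext T (\<lambda>_. 0) = (\<lambda>_. 0)"
  by (simp add: lin_ext_def)

lemma lin_ext_kdelta: "lin_ext T (kdelta b) = (T b :: _ \<Rightarrow> 'k::comm_ring_1)"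
proof
  fix c
  have "lin_ext T (kdelta b) c = (\<Sum>b'\<in>{b}. kdelta b b' * T b' c)"
    by (rule lin_ext_eq_sum) (auto simp: support_def kdelta_def)
  then show "lin_ext T (kdelta b) c = T b c" by (simp add: kdelta_def)
qed

lemma lin_ext_add:
  fixes f g :: "'b \<Rightarrow> 'k::comm_ring_1"
  assumes "finsupp f" "finsupp g"
  shows "lin_ext T (\<lambda>b. f b + g b) = (\<lambda>c. lin_ext T f c + lin_ext T g c)"
proof
  fix c
  let ?S = "support f \<union> support g"
  have S: "finite ?S" using assms by auto
  have "lin_ext T (\<lambda>b. f b + g b) c = (\<Sum>b\<in>?S. (f b + g b) * T b c)"
    by (rule lin_ext_eq_sum[OF S]) (auto simp: support_def)
  also have "\<dots> = (\<Sum>b\<in>?S. f b * T b c) + (\<Sum>b\<in>?S. g b * T b c)"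
    by (simp add: distrib_right sum.distrib)
  also have "\<dots> = lin_ext T f c + lin_ext T g c"
    by (simp add: lin_ext_eq_sum[OF S])
  finally show "lin_ext T (\<lambda>b. f b + g b) c = lin_ext T f c + lin_ext T g c" .
qed

lemma lin_ext_scale:
  fixes f :: "'b \<Rightarrow> 'k::comm_ring_1"
  assumes "finsupp f"
  shows "lin_ext T (\<lambda>b. a * f b) = (\<lambda>c. a * lin_ext T f c)"
proof
  fix c
  have "lin_ext T (\<lambda>b. a * f b) c = (\<Sum>b\<in>support f. (a * f b) * T b c)"
    by (rule lin_ext_eq_sum[OF assms]) (auto simp: support_def)
  also have "\<dots> = a * lin_ext T f c"
    using lin_ext_eq_sum[OF assms, of f T c] by (simp add: sum_distrib_left mult.assoc)
  finally show "lin_ext T (\<lambda>b. a * f b) c = a * lin_ext T f c" .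
qed

lemma lin_ext_diff:
  fixes f g :: "'b \<Rightarrow> 'k::comm_ring_1"
  assumes "finsupp f" "finsupp g"
  shows "lin_ext T (\<lambda>b. f b - g b) = (\<lambda>c. lin_ext T f c - lin_ext T g c)"
  using lin_ext_add[OF assms(1) finsupp_scale[OF assms(2)], of T "-1"]
    lin_ext_scale[OF assms(2), of T "-1"]
  by simp

lemma lin_ext_sum:
  fixes f :: "'i \<Rightarrow> 'b \<Rightarrow> 'k::comm_ring_1"
  assumes "finite I" "\<And>i. i \<in> I \<Longrightarrow> finsupp (f i)"
  shows "lin_ext T (\<lambda>b. \<Sum>i\<in>I. f i b) = (\<lambda>c. \<Sum>i\<in>I. lin_ext T (f i) c)"
  using assms
proof (induction I rule: finite_induct)
  case (insert i I)
  have "finsupp (\<lambda>b. \<Sum>i\<in>I. f i b)" by (rule finsupp_sum) (use insert in auto)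
  then show ?case
    using insert lin_ext_add[of "f i" "\<lambda>b. \<Sum>i\<in>I. f i b" T] by simp
qed (simp add: lin_ext_zero)

lemma lin_ext_cong: "(\<And>b. f b \<noteq> 0 \<Longrightarrow> T b = T' b) \<Longrightarrow> lin_ext T f = lin_ext T' f"
  unfolding lin_ext_def by (intro ext sum.cong) auto

lemma lin_ext_kernel_add: "lin_ext (\<lambda>b g. T b g + T' b g) f = (\<lambda>g. lin_ext T f g + lin_ext T' f g)"
  unfolding lin_ext_def by (simp add: ring_distribs sum.distrib)

lemma lin_ext_kernel_diff: "lin_ext (\<lambda>b g. T b g - T' b g) f = (\<lambda>g. lin_ext T f g - lin_ext T' f g)"
  unfolding lin_ext_def by (simp add: ring_distribs sum_subtractf)

lemma finsupp_lin_ext: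
  fixes f :: "'b \<Rightarrow> 'k::comm_ring_1"
  assumes "finsupp f" "\<And>b. f b \<noteq> 0 \<Longrightarrow> finsupp (T b)"
  shows "finsupp (lin_ext T f)"
proof -
  have "lin_ext T f = (\<lambda>c. \<Sum>b\<in>support f. f b * T b c)"
    unfolding lin_ext_def support_def by simp
  moreover have "finsupp (\<lambda>c. \<Sum>b\<in>support f. f b * T b c)"
    using assms by (intro finsupp_sum finsupp_scale) (auto simp: support_def)
  ultimately show ?thesis by simp
qed

lemma lin_ext_lin_ext:
  fixes f :: "'b \<Rightarrow> 'k::comm_ring_1"
  assumes f: "finsupp f" and S: "\<And>b. f b \<noteq> 0 \<Longrightarrow> finsupp (S b)"
  shows "lin_ext T (lin_ext S f) = lin_ext (\<lambda>b. lin_ext T (S b)) f"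
proof -
  have S': "finsupp (S b)" if "b \<in> support f" for b
    using S that by (auto simp: support_def)
  have "lin_ext T (lin_ext S f) = lin_ext T (\<lambda>c. \<Sum>b\<in>support f. f b * S b c)"
    unfolding lin_ext_def support_def by simp
  also have "\<dots> = (\<lambda>c. \<Sum>b\<in>support f. lin_ext T (\<lambda>c. f b * S b c) c)"
    by (rule lin_ext_sum[OF f finsupp_scale[OF S']])
  also have "\<dots> = (\<lambda>c. \<Sum>b\<in>support f. f b * lin_ext T (S b) c)"
    by (intro ext sum.cong refl) (simp add: lin_ext_scale S')
  also have "\<dots> = lin_ext (\<lambda>b. lin_ext T (S b)) f"
    unfolding lin_ext_def support_def by simp
  finally show ?thesis .
qed

lemma lin_ext_kdelta_self: "finsupp f \<Longrightarrow> lin_ext kdelta f = (f :: _ \<Rightarrow> 'k::comm_ring_1)"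
proof
  fix c assume f: "finsupp f"
  have "lin_ext kdelta f c = (\<Sum>b\<in>insert c (support f). f b * kdelta b c)"
    by (rule lin_ext_eq_sum) (use f in auto)
  also have "\<dots> = f c"
    by (subst sum.remove[of _ c]) (use f in \<open>auto simp: kdelta_def intro!: sum.neutral split: if_splits\<close>)
  finally show "lin_ext kdelta f c = f c" .
qed

definition lin_map :: "('b \<Rightarrow> 'c) \<Rightarrow> ('b \<Rightarrow> 'k::field) \<Rightarrow> 'c \<Rightarrow> 'k" where
  "lin_map M f = lin_ext (\<lambda>b. kdelta (M b)) f"

lemma lin_map_add:
  "finsupp f \<Longrightarrow> finsupp g \<Longrightarrow> lin_map M (\<lambda>b. f b + g b) = (\<lambda>c. lin_map M f c + lin_map M g c)"
  unfolding lin_map_def by (rule lin_ext_add)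

lemma lin_map_scale: "finsupp f \<Longrightarrow> lin_map M (\<lambda>b. a * f b) = (\<lambda>c. a * lin_map M f c)"
  unfolding lin_map_def by (rule lin_ext_scale)

lemma lin_map_kdelta_diff2:
  "lin_map M (\<lambda>g. kdelta a g - d * kdelta b g) = (\<lambda>g. kdelta (M a) g - d * kdelta (M b) g)"
  unfolding lin_map_def
  by (simp add: lin_ext_diff lin_ext_scale finsupp_diff finsupp_scale finsupp_kdelta lin_ext_kdelta)

lemma lin_map_kdelta_diff3:
  "lin_map M (\<lambda>g. kdelta a g - kdelta b g - kdelta c g)
     = (\<lambda>g. kdelta (M a) g - kdelta (M b) g - kdelta (M c) g)"
  unfolding lin_map_def by (simp add: lin_ext_diff finsupp_diff finsupp_kdelta lin_ext_kdelta)

lemma lin_map_sum_kdelta: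
  "finite I \<Longrightarrow>
    lin_map M (\<lambda>g. \<Sum>i\<in>I. c i * kdelta (t i) g) = (\<lambda>g. \<Sum>i\<in>I. c i * kdelta (M (t i)) g)"
  unfolding lin_map_def
  by (subst lin_ext_sum) (auto intro: finsupp_scale finsupp_kdelta simp: lin_ext_scale finsupp_kdelta lin_ext_kdelta)

lemma lin_map_comp: "finsupp f \<Longrightarrow> lin_map M (lin_map N f) = lin_map (\<lambda>b. M (N b)) f"
  unfolding lin_map_def by (subst lin_ext_lin_ext) (auto intro: finsupp_kdelta simp: lin_ext_kdelta)

lemma lin_map_id: "finsupp f \<Longrightarrow> (\<And>b. f b \<noteq> 0 \<Longrightarrow> M b = b) \<Longrightarrow> lin_map M f = f"
  unfolding lin_map_def by (subst lin_ext_cong[of f _ kdelta]) (auto simp: lin_ext_kdelta_self)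

lemma kspan_base: "s \<in> S \<Longrightarrow> s \<in> kspan S"
  using kspan.step[OF _ kspan.zero, of s S 1] by simp

lemma kspan_add: "t \<in> kspan S \<Longrightarrow> u \<in> kspan S \<Longrightarrow> (\<lambda>g. t g + u g) \<in> kspan S"
proof (induction t rule: kspan.induct)
  case (step s t c)
  then have "(\<lambda>g. c * s g + (t g + u g)) \<in> kspan S" by (intro kspan.step) auto
  then show ?case by (simp add: add.assoc)
qed simp

lemma kspan_scale: "t \<in> kspan S \<Longrightarrow> (\<lambda>g. a * t g) \<in> kspan S"
proof (induction t rule: kspan.induct)
  case zero then show ?case using kspan.zero by simp
next
  case (step s t c)
  then have "(\<lambda>g. (a * c) * s g + a * t g) \<in> kspan S" by (intro kspan.step) auto
  then show ?case by (simp add: ring_distribs mult.assoc)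
qed

lemma kspan_sum:
  "finite I \<Longrightarrow> (\<And>i. i \<in> I \<Longrightarrow> t i \<in> kspan S) \<Longrightarrow> (\<lambda>g. \<Sum>i\<in>I. t i g) \<in> kspan S"
proof (induction I rule: finite_induct)
  case empty then show ?case using kspan.zero by simp
next
  case (insert i I)
  then show ?case using kspan_add[of "t i" S "\<lambda>g. \<Sum>i\<in>I. t i g"] by simp
qed

lemma finsupp_kspan:
  assumes "\<And>s. s \<in> S \<Longrightarrow> finsupp s"
  shows "t \<in> kspan S \<Longrightarrow> finsupp t"
  by (induction t rule: kspan.induct) (simp_all add: finsupp_zero finsupp_add finsupp_scale assms)

lemma lin_ext_kspan:
  fixes S :: "('b \<Rightarrow> 'k::field) set"
  assumes fin: "\<And>s. s \<in> S \<Longrightarrow> finsupp s" and gen: "\<And>s. s \<in> S \<Longrightarrow> lin_ext T s \<in> kspan S'"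
  shows "t \<in> kspan S \<Longrightarrow> lin_ext T t \<in> kspan S'"
proof (induction t rule: kspan.induct)
  case zero then show ?case by (simp add: lin_ext_zero kspan.zero)
next
  case (step s t c)
  have "finsupp t" using finsupp_kspan[OF fin step(2)] .
  moreover have "finsupp s" using fin step(1) .
  ultimately have "lin_ext T (\<lambda>g. c * s g + t g) = (\<lambda>g. c * lin_ext T s g + lin_ext T t g)"
    by (simp add: lin_ext_add finsupp_scale lin_ext_scale)
  then show ?case
    using kspan_add[OF kspan_scale[OF gen[OF step(1)]] step(3)] by simp
qed

lemma lin_map_kspan:
  "(\<And>s. s \<in> S \<Longrightarrow> finsupp s) \<Longrightarrow> (\<And>s. s \<in> S \<Longrightarrow> lin_map M s \<in> kspan S')
    \<Longrightarrow> t \<in> kspan S \<Longrightarrow> lin_map M t \<in> kspan S'"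
  unfolding lin_map_def by (rule lin_ext_kspan)

section \<open>Bar chains and the bar differential\<close>

lemma bar_chains_iff:
  "f \<in> bar_chains n \<longleftrightarrow> finsupp f \<and> (\<forall>b. f b \<noteq> 0 \<longrightarrow> length (fst (snd b)) = n)"
  unfolding bar_chains_def support_def by auto

lemma finsupp_bar_chains: "f \<in> bar_chains n \<Longrightarrow> finsupp f"
  by (simp add: bar_chains_iff)

lemma kdelta_in_bar_chains: "length as = n \<Longrightarrow> kdelta (x, as, y) \<in> bar_chains n"
  using finsupp_kdelta[of "(x, as, y)"] by (auto simp: bar_chains_iff kdelta_def)

lemma zero_in_bar_chains: "(\<lambda>_. 0) \<in> bar_chains n"
  by (auto simp: bar_chains_iff finsupp_zero)

lemma bar_chains_add:
  "f \<in> bar_chains n \<Longrightarrow> g \<in> bar_chains n \<Longrightarrow> (\<lambda>b. f b + g b :: 'k::field) \<in> bar_chains n"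
  unfolding bar_chains_iff by (metis (mono_tags, lifting) add.right_neutral add_0 finsupp_add)

lemma bar_chains_scale: "f \<in> bar_chains n \<Longrightarrow> (\<lambda>b. a * f b :: 'k::field) \<in> bar_chains n"
  by (auto simp: bar_chains_iff intro: finsupp_scale)

lemma bar_chains_diff:
  "f \<in> bar_chains n \<Longrightarrow> g \<in> bar_chains n \<Longrightarrow> (\<lambda>b. f b - g b :: 'k::field) \<in> bar_chains n"
  using bar_chains_add[OF _ bar_chains_scale, of f n g "-1"] by simp

lemma bar_chains_sum:
  "finite I \<Longrightarrow> (\<And>i. i \<in> I \<Longrightarrow> f i \<in> bar_chains n)
    \<Longrightarrow> (\<lambda>b. \<Sum>i\<in>I. f i b :: 'k::field) \<in> bar_chains n"
proof (induction I rule: finite_induct)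
  case empty then show ?case using zero_in_bar_chains by simp
next
  case (insert i I)
  then show ?case using bar_chains_add[of "f i" n "\<lambda>b. \<Sum>i\<in>I. f i b"] by simp
qed

lemma lin_ext_in_bar_chains:
  fixes f :: "_ \<Rightarrow> 'k::field"
  assumes "finsupp f" "\<And>b. f b \<noteq> 0 \<Longrightarrow> T b \<in> bar_chains m"
  shows "lin_ext T f \<in> bar_chains m"
proof -
  have "lin_ext T f = (\<lambda>c. \<Sum>b\<in>support f. f b * T b c)"
    unfolding lin_ext_def support_def by simp
  also have "\<dots> \<in> bar_chains m"
    using assms by (intro bar_chains_sum bar_chains_scale) (auto simp: support_def)
  finally show ?thesis .
qed

definition bar_face ::
  "('a \<Rightarrow> 'a \<Rightarrow> 'a) \<Rightarrow> ('x \<Rightarrow> 'a \<Rightarrow> 'x) \<Rightarrow> ('a \<Rightarrow> 'y \<Rightarrow> 'y) \<Rightarrow> nat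
    \<Rightarrow> 'x \<times> 'a list \<times> 'y \<Rightarrow> 'x \<times> 'a list \<times> 'y" where
  "bar_face m r l j t = (case t of (x, as, y) \<Rightarrow>
     if j = 0 then (r x (hd as), tl as, y)
     else if j < length as then (x, take (j - 1) as @ [m (as ! (j - 1)) (as ! j)] @ drop (j + 1) as, y)
     else (x, butlast as, l (last as) y))"

lemma bar_face_0: "bar_face m r l 0 (x, as, y) = (r x (hd as), tl as, y)"
  by (simp add: bar_face_def)

lemma bar_face_mid:
  "0 < j \<Longrightarrow> j < length as \<Longrightarrow>
    bar_face m r l j (x, as, y) = (x, take (j - 1) as @ [m (as ! (j - 1)) (as ! j)] @ drop (j + 1) as, y)"
  by (simp add: bar_face_def)

lemma bar_face_last:
  "0 < j \<Longrightarrow> length as \<le> j \<Longrightarrow> bar_face m r l j (x, as, y) = (x, butlast as, l (last as) y)"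
  by (simp add: bar_face_def)

lemma length_bar_face:
  "as \<noteq> [] \<Longrightarrow> j \<le> length as \<Longrightarrow> length (fst (snd (bar_face m r l j (x, as, y)))) = length as - 1"
  by (auto simp: bar_face_def)

lemma bar_d_basis_Nil: "bar_d_basis m r l (x, [], y) = (\<lambda>_. 0)"
  by (simp add: bar_d_basis_def)

lemma bar_d_basis_eq_faces:
  assumes "as \<noteq> []"
  shows "bar_d_basis m r l (x, as, y)
    = (\<lambda>g. \<Sum>j\<le>length as. (-1) ^ j * kdelta (bar_face m r l j (x, as, y)) g :: 'k::field)"
proof
  fix g
  obtain n where n: "length as = Suc n" using assms by (cases as) auto
  let ?K = "\<lambda>j. (-1) ^ j * kdelta (bar_face m r l j (x, as, y)) g :: 'k"
  have "(\<Sum>j\<le>length as. ?K j) = ?K 0 + (\<Sum>i<n. ?K (Suc i)) + ?K (Suc n)"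
    unfolding n sum.atMost_Suc by (simp only: sum.atMost_shift)
  also have "(\<Sum>i<n. ?K (Suc i)) = (\<Sum>i<n. (-1) ^ (i + 1) *
             kdelta (x, take i as @ [m (as ! i) (as ! (i + 1))] @ drop (i + 2) as, y) g)"
    by (intro sum.cong refl) (simp add: bar_face_mid n)
  also have "?K 0 = kdelta (r x (hd as), tl as, y) g" by (simp add: bar_face_0)
  also have "?K (Suc n) = (-1) ^ length as * kdelta (x, butlast as, l (last as) y) g"
    by (simp add: bar_face_last n)
  finally show "bar_d_basis m r l (x, as, y) g = (\<Sum>j\<le>length as. ?K j)"
    unfolding bar_d_basis_def using assms n by simp
qed

lemma bar_d_basis_in_bar_chains:
  assumes "length as = Suc n"
  shows "bar_d_basis m r l (x, as, y) \<in> bar_chains n"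
proof -
  have ne: "as \<noteq> []" using assms by auto
  have "kdelta (bar_face m r l j (x, as, y)) \<in> bar_chains n" if "j \<le> length as" for j
    using length_bar_face[OF ne that, of m r l x y] assms
    by (cases "bar_face m r l j (x, as, y)") (simp add: kdelta_in_bar_chains)
  then show ?thesis
    unfolding bar_d_basis_eq_faces[OF ne] by (intro bar_chains_sum bar_chains_scale) auto
qed

lemma finsupp_bar_d_basis: "finsupp (bar_d_basis m r l b :: _ \<Rightarrow> 'k::field)"
proof -
  obtain x as y where b: "b = (x, as, y)" by (cases b)
  show ?thesis
  proof (cases as)
    case Nil then show ?thesis using b by (simp add: bar_d_basis_Nil finsupp_zero)
  next
    case (Cons a as')
    then have "(bar_d_basis m r l (x, as, y) :: _ \<Rightarrow> 'k) \<in> bar_chains (length as')"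
      by (intro bar_d_basis_in_bar_chains) simp
    then show ?thesis using b by (simp add: bar_chains_iff)
  qed
qed

lemma bar_d_bar_chains_0:
  assumes "w \<in> bar_chains 0"
  shows "lin_ext (bar_d_basis m r l) w = (\<lambda>_. 0 :: 'k::field)"
proof -
  have "lin_ext (bar_d_basis m r l) w = lin_ext (\<lambda>_ _. 0) w"
  proof (rule lin_ext_cong)
    fix b assume "w b \<noteq> 0"
    then have "length (fst (snd b)) = 0" using assms unfolding bar_chains_iff by blast
    then show "bar_d_basis m r l b = (\<lambda>_. 0)" by (cases b) (simp add: bar_d_basis_Nil)
  qed
  then show ?thesis by (simp add: lin_ext_def)
qed

section \<open>Functoriality in the letters\<close>

definition bar_map :: "('a \<Rightarrow> 'b) \<Rightarrow> 'x \<times> 'a list \<times> 'y \<Rightarrow> 'x \<times> 'b list \<times> 'y" where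
  "bar_map F = (\<lambda>(x, as, y). (x, map F as, y))"

lemma bar_map_simp [simp]: "bar_map F (x, as, y) = (x, map F as, y)"
  by (simp add: bar_map_def)

lemma bar_map_bar_map [simp]: "bar_map F (bar_map G b) = bar_map (\<lambda>a. F (G a)) b"
  by (cases b) simp

lemma bar_map_ident [simp]: "bar_map (\<lambda>a. a) b = b"
  by (cases b) simp

lemma bar_map_bar_face:
  assumes r: "\<And>x a. rB x (F a) = rA x a" and l: "\<And>a y. lB (F a) y = lA a y"
    and m: "\<And>a b. F (mA a b) = mB (F a) (F b)" and ne: "as \<noteq> []"
  shows "bar_map F (bar_face mA rA lA j (x, as, y)) = bar_face mB rB lB j (x, map F as, y)"
proof -
  consider "j = 0" | "0 < j" "j < length as" | "0 < j" "length as \<le> j" by linarith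
  then show ?thesis
  proof cases
    case 1 then show ?thesis using ne by (simp add: bar_face_0 hd_map map_tl r)
  next
    case 2 then show ?thesis by (simp add: bar_face_mid take_map drop_map m)
  next
    case 3 then show ?thesis using ne by (simp add: bar_face_last map_butlast last_map l)
  qed
qed

lemma lin_map_bar_d_basis:
  assumes r: "\<And>x a. rB x (F a) = rA x a" and l: "\<And>a y. lB (F a) y = lA a y"
    and m: "\<And>a b. F (mA a b) = mB (F a) (F b)"
  shows "lin_map (bar_map F) (bar_d_basis mA rA lA b :: _ \<Rightarrow> 'k::field) = bar_d_basis mB rB lB (bar_map F b)"
proof -
  obtain x as y where b: "b = (x, as, y)" by (cases b)
  show ?thesis
  proof (cases "as = []")
    case True then show ?thesis
      by (simp add: b bar_d_basis_Nil lin_map_def lin_ext_zero)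
  next
    case False
    then show ?thesis
      by (simp add: b bar_d_basis_eq_faces lin_map_sum_kdelta
          bar_map_bar_face[where rB = rB and lB = lB and mB = mB, OF r l m False])
  qed
qed

lemma bar_d_lin_map:
  assumes r: "\<And>x a. rB x (F a) = rA x a" and l: "\<And>a y. lB (F a) y = lA a y"
    and m: "\<And>a b. F (mA a b) = mB (F a) (F b)" and w: "finsupp (w :: _ \<Rightarrow> 'k::field)"
  shows "lin_ext (bar_d_basis mB rB lB) (lin_map (bar_map F) w)
    = lin_map (bar_map F) (lin_ext (bar_d_basis mA rA lA) w)"
proof -
  have "lin_ext (bar_d_basis mB rB lB) (lin_map (bar_map F) w)
      = lin_ext (\<lambda>b. lin_ext (bar_d_basis mB rB lB) (kdelta (bar_map F b))) w"
    unfolding lin_map_def by (rule lin_ext_lin_ext[OF w finsupp_kdelta])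
  also have "\<dots> = lin_ext (\<lambda>b. lin_map (bar_map F) (bar_d_basis mA rA lA b)) w"
    by (simp add: lin_ext_kdelta lin_map_bar_d_basis[where rB = rB and lB = lB and mB = mB, OF r l m])
  also have "\<dots> = lin_map (bar_map F) (lin_ext (bar_d_basis mA rA lA) w)"
    unfolding lin_map_def by (rule lin_ext_lin_ext[OF w finsupp_bar_d_basis, symmetric])
  finally show ?thesis .
qed

lemma lin_map_bar_map_in_bar_chains:
  assumes f: "f \<in> bar_chains n"
  shows "lin_map (bar_map F) f \<in> bar_chains n"
  unfolding lin_map_def
proof (rule lin_ext_in_bar_chains)
  show "finsupp f" using f by (rule finsupp_bar_chains)
  fix b assume "f b \<noteq> 0"
  then obtain x as y where "b = (x, as, y)" "length as = n"
    using f by (cases b) (auto simp: bar_chains_iff)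
  then show "kdelta (bar_map F b) \<in> bar_chains n" by (simp add: kdelta_in_bar_chains)
qed

lemma finsupp_bar_rel_gens: "s \<in> bar_rel_gens addA sA oneA rA lA n \<Longrightarrow> finsupp s"
  unfolding bar_rel_gens_def by (auto intro!: finsupp_diff finsupp_scale finsupp_kdelta)

lemma bar_rel_gens_in_bar_chains:
  "s \<in> bar_rel_gens addA sA oneA rA lA n \<Longrightarrow> (s :: _ \<Rightarrow> 'k::field) \<in> bar_chains n"
  unfolding bar_rel_gens_def
  by (elim UnE CollectE exE conjE; hypsubst; intro bar_chains_diff bar_chains_scale kdelta_in_bar_chains; simp)

text \<open>\<open>\<kappa> k\<close> is the new position of the \<open>k\<close>-th letter and \<open>\<nu> k\<close> its new value, so that
  besides letterwise maps this also covers the insertion of a letter.\<close>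

lemma lin_map_bar_rel_gens:
  fixes M :: "'x::ab_group_add \<times> 'a list \<times> 'y::ab_group_add \<Rightarrow> 'x \<times> 'b list \<times> 'y"
  assumes M: "\<And>x as y. M (x, as, y) = (x, L as, y)"
    and length: "\<And>as. length as = n \<Longrightarrow> length (L as) = n'"
    and update: "\<And>as k v. length as = n \<Longrightarrow> k < n \<Longrightarrow> L (as[k := v]) = (L as)[\<kappa> k := \<nu> k v]"
    and index: "\<And>k. k < n \<Longrightarrow> \<kappa> k < n'"
    and add: "\<And>k a b. k < n \<Longrightarrow> \<nu> k (addA a b) = addB (\<nu> k a) (\<nu> k b)"
    and scale: "\<And>k c a. k < n \<Longrightarrow> \<nu> k (sA c a) = sB c (\<nu> k a)"
    and ract_one: "\<And>x c. rA x (sA c oneA) = rB x (sB c oneB)"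
    and lact_one: "\<And>y c. lA (sA c oneA) y = lB (sB c oneB) y"
    and s: "s \<in> bar_rel_gens addA sA oneA rA lA n"
  shows "lin_map M (s :: _ \<Rightarrow> 'k::field) \<in> bar_rel_gens addB sB oneB rB lB n'"
  using s unfolding bar_rel_gens_def
  apply (elim UnE CollectE exE conjE)
       apply (simp_all only: lin_map_kdelta_diff3 lin_map_kdelta_diff2 M update add scale ract_one lact_one)
       apply (fast intro: length index)+
  done

section \<open>The contracting homotopy\<close>

definition bar_insert :: "('a \<Rightarrow> 'a) \<Rightarrow> 'a \<Rightarrow> nat \<Rightarrow> 'a list \<Rightarrow> 'a list" where
  "bar_insert c u i as = map c (take i as) @ u # drop i as"

definition bar_shift :: "('a \<Rightarrow> 'a) \<Rightarrow> 'a \<Rightarrow> nat \<Rightarrow> 'x \<times> 'a list \<times> 'y \<Rightarrow> 'x \<times> 'a list \<times> 'y" where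
  "bar_shift c u i = (\<lambda>(x, as, y). (x, bar_insert c u i as, y))"

lemma bar_shift_simp [simp]: "bar_shift c u i (x, as, y) = (x, bar_insert c u i as, y)"
  by (simp add: bar_shift_def)

lemma length_bar_insert [simp]: "length (bar_insert c u i as) = Suc (length as)"
  by (simp add: bar_insert_def)

lemma bar_insert_not_Nil [simp]: "bar_insert c u i as \<noteq> []"
  by (simp add: bar_insert_def)

lemma bar_insert_0 [simp]: "bar_insert c u 0 as = u # as"
  by (simp add: bar_insert_def)

lemma bar_insert_Cons [simp]: "bar_insert c u (Suc i) (a # as) = c a # bar_insert c u i as"
  by (simp add: bar_insert_def)

lemma bar_insert_append_left: "bar_insert c u (length A + i) (A @ B) = map c A @ bar_insert c u i B"
  by (simp add: bar_insert_def)

lemma bar_insert_append_right: "i \<le> length A \<Longrightarrow> bar_insert c u i (A @ B) = bar_insert c u i A @ B"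
  by (simp add: bar_insert_def)

lemma bar_insert_update:
  assumes "k < length as"
  shows "bar_insert c u i (as[k := v])
    = (bar_insert c u i as)[(if k < i then k else Suc k) := (if k < i then c v else v)]"
proof (cases "k < i")
  case True
  then have "k < length (map c (take i as))" using assms by simp
  with True show ?thesis
    unfolding bar_insert_def by (simp add: take_update_swap map_update list_update_append1)
next
  case False
  then have "length (map c (take i as)) = i" "Suc k - i = Suc (k - i)" using assms by auto
  with False show ?thesis
    unfolding bar_insert_def by (simp add: drop_update_swap list_update_append)
qed

lemma bar_face_append:
  "bar_face m r l (Suc (length A)) (x, A @ a1 # a2 # B, y) = (x, A @ m a1 a2 # B, y)"
  by (simp add: bar_face_def nth_append)

lemma split_list_at_pair:
  assumes "0 < j" "j < length as"
  obtains A a1 a2 B where "as = A @ a1 # a2 # B" "j = Suc (length A)"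
proof
  have "as = take (j - 1) as @ drop (j - 1) as" by simp
  also have "drop (j - 1) as = as ! (j - 1) # drop j as"
    using assms Cons_nth_drop_Suc[of "j - 1" as] by simp
  also have "drop j as = as ! j # drop (j + 1) as"
    using assms by (simp add: Cons_nth_drop_Suc)
  finally show "as = take (j - 1) as @ as ! (j - 1) # as ! j # drop (j + 1) as" .
  show "j = Suc (length (take (j - 1) as))" using assms by simp
qed

lemma split_list_at_index:
  assumes "k < length as"
  obtains A a B where "as = A @ a # B" "length A = k"
proof
  show "as = take k as @ as ! k # drop (Suc k) as" using assms by (rule id_take_nth_drop)
  show "length (take k as) = k" using assms by simp
qed

lemma bar_face_bar_shift_below:
  assumes mult: "\<And>a b. m (c a) (c b) = c (m a b)" and ract: "\<And>x a. r x (c a) = r x a"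
    and "j < i" "i \<le> length as"
  shows "bar_face m r l j (bar_shift c u i (x, as, y)) = bar_shift c u (i - 1) (bar_face m r l j (x, as, y))"
proof (cases "j = 0")
  case True
  obtain a as' where "as = a # as'" using assms by (cases as) auto
  moreover obtain i' where "i = Suc i'" using assms by (cases i) auto
  ultimately show ?thesis using True by (simp add: bar_face_0 ract)
next
  case False
  have "0 < j" "j < length as" using False assms by auto
  then obtain A a1 a2 B where as: "as = A @ a1 # a2 # B" and j: "j = Suc (length A)"
    by (rule split_list_at_pair)
  obtain k where i: "i = length A + Suc (Suc k)"
    using assms j by (metis add.commute add_Suc less_iff_Suc_add)
  have "bar_insert c u i as = map c A @ c a1 # c a2 # bar_insert c u k B"
    unfolding as i bar_insert_append_left by simp
  moreover have "bar_insert c u (i - 1) (A @ m a1 a2 # B) = map c A @ c (m a1 a2) # bar_insert c u k B"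
    using bar_insert_append_left[of c u A "Suc k"] i by simp
  ultimately show ?thesis
    using bar_face_append[of m r l "map c A"] by (simp add: as j bar_face_append mult)
qed

lemma bar_face_bar_shift_same:
  assumes "\<And>a. m (c a) u = c a" and "\<And>x. r x u = x" and "i \<le> length as"
  shows "bar_face m r l i (bar_shift c u i (x, as, y)) = (x, map c (take i as) @ drop i as, y)"
proof (cases i)
  case 0 then show ?thesis by (simp add: bar_face_0 assms)
next
  case (Suc k)
  have "k < length as" using Suc assms(3) by simp
  then obtain A a B where as: "as = A @ a # B" and k: "length A = k"
    by (rule split_list_at_index)
  have "bar_insert c u i as = map c A @ c a # u # B"
    using bar_insert_append_left[of c u A 1] by (simp add: as Suc k[symmetric])
  then show ?thesis
    using bar_face_append[of m r l "map c A"] by (simp add: as Suc k[symmetric] assms)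
qed

lemma bar_face_Suc_bar_shift_same:
  assumes "\<And>a. m u a = c a" and "\<And>y. l u y = y" and "i \<le> length as"
  shows "bar_face m r l (Suc i) (bar_shift c u i (x, as, y))
    = (x, map c (take (Suc i) as) @ drop (Suc i) as, y)"
proof (cases "i = length as")
  case True then show ?thesis by (simp add: bar_face_last bar_insert_def assms)
next
  case False
  have "i < length as" using False assms(3) by simp
  then obtain A a B where as: "as = A @ a # B" and i: "length A = i"
    by (rule split_list_at_index)
  have "bar_insert c u i as = map c A @ u # a # B"
    using bar_insert_append_left[of c u A 0] by (simp add: as i[symmetric])
  then show ?thesis
    using bar_face_append[of m r l "map c A"] by (simp add: as i[symmetric] assms)
qed

lemma bar_face_bar_shift_above:
  assumes "Suc i < j" "j \<le> Suc (length as)"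
  shows "bar_face m r l j (bar_shift c u i (x, as, y)) = bar_shift c u i (bar_face m r l (j - 1) (x, as, y))"
proof (cases "j = Suc (length as)")
  case True
  have "length as - 1 < length as" using True assms by simp
  then obtain A z B where as: "as = A @ z # B" and A: "length A = length as - 1"
    by (rule split_list_at_index)
  then have "B = []" "i \<le> length A" using True assms by auto
  with as True show ?thesis by (simp add: bar_face_last bar_insert_append_right)
next
  case False
  have "0 < j - 1" "j - 1 < length as" using False assms by auto
  then obtain A a1 a2 B where as: "as = A @ a1 # a2 # B" and j: "j - 1 = Suc (length A)"
    by (rule split_list_at_pair)
  have i: "i \<le> length A" using assms j by simp
  define A' where "A' = bar_insert c u i A"
  have shift: "bar_insert c u i as = A' @ a1 # a2 # B"
    by (simp add: as A'_def bar_insert_append_right i)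
  have "j = Suc (length A')" using j assms by (simp add: A'_def)
  then have "bar_face m r l j (x, A' @ a1 # a2 # B, y) = (x, A' @ m a1 a2 # B, y)"
    by (simp only: bar_face_append)
  moreover have "bar_face m r l (j - 1) (x, as, y) = (x, A @ m a1 a2 # B, y)"
    unfolding as j by (rule bar_face_append)
  ultimately show ?thesis by (simp add: shift A'_def bar_insert_append_right i)
qed

text \<open>Below, \<open>F i j\<close> is the \<open>j\<close>-th face of the \<open>i\<close>-th shift and \<open>G i j\<close> the \<open>i\<close>-th shift of the
  \<open>j\<close>-th face: faces away from the inserted letter commute with the shift, the two faces next to
  it remove it, and what remains telescopes.\<close>

lemma alternating_double_sum_telescope:
  fixes F G :: "nat \<Rightarrow> nat \<Rightarrow> 'k::comm_ring_1" and A :: "nat \<Rightarrow> 'k"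
  assumes "\<forall>i\<le>n. \<forall>j<i. F i j = G (i - 1) j"
    and "\<forall>i\<le>n. F i i = A i" and "\<forall>i\<le>n. F i (Suc i) = A (Suc i)"
    and "\<forall>i\<le>n. \<forall>j. Suc i < j \<and> j \<le> Suc n \<longrightarrow> F i j = G i (j - 1)"
  shows "(\<Sum>i\<le>n. (-1) ^ i * (\<Sum>j\<le>Suc n. (-1) ^ j * F i j))
       + (\<Sum>j\<le>n. (-1) ^ j * (\<Sum>i<n. (-1) ^ i * G i j)) = A 0 - A (Suc n)"
  using assms
proof (induction n)
  case (Suc n)
  have IH: "(\<Sum>i\<le>n. (-1) ^ i * (\<Sum>j\<le>Suc n. (-1) ^ j * F i j))
      + (\<Sum>j\<le>n. (-1) ^ j * (\<Sum>i<n. (-1) ^ i * G i j)) = A 0 - A (Suc n)"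
    using Suc.prems by (intro Suc.IH) auto
  have F_last: "F i (Suc (Suc n)) = G i (Suc n)" if "i \<le> n" for i
    using Suc.prems(4) that by auto
  have F_Suc: "F (Suc n) j = G n j" if "j \<le> n" for j
    using Suc.prems(1) that by auto
  have A_Suc: "F (Suc n) (Suc n) = A (Suc n)" "F (Suc n) (Suc (Suc n)) = A (Suc (Suc n))"
    using Suc.prems(2,3) by auto
  have step_F: "(\<Sum>i\<le>Suc n. (-1) ^ i * (\<Sum>j\<le>Suc (Suc n). (-1) ^ j * F i j))
      = (\<Sum>i\<le>n. (-1) ^ i * (\<Sum>j\<le>Suc n. (-1) ^ j * F i j))
        + (\<Sum>i\<le>n. (-1) ^ i * (-1) ^ n * G i (Suc n))
        + (-1) ^ Suc n * (\<Sum>j\<le>n. (-1) ^ j * G n j) + A (Suc n) - A (Suc (Suc n))"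
  proof -
    have rows: "(\<Sum>i\<le>n. (-1) ^ i * (\<Sum>j\<le>Suc (Suc n). (-1) ^ j * F i j))
        = (\<Sum>i\<le>n. (-1) ^ i * (\<Sum>j\<le>Suc n. (-1) ^ j * F i j))
          + (\<Sum>i\<le>n. (-1) ^ i * (-1) ^ n * G i (Suc n))"
      by (simp add: sum.distrib ring_distribs F_last power_Suc mult.assoc)
    have last_row: "(\<Sum>j\<le>Suc (Suc n). (-1) ^ j * F (Suc n) j) = (\<Sum>j\<le>n. (-1) ^ j * G n j)
        + (-1) ^ Suc n * A (Suc n) + (-1) ^ Suc (Suc n) * A (Suc (Suc n))"
      by (simp add: F_Suc A_Suc)
    have "(\<Sum>i\<le>Suc n. (-1) ^ i * (\<Sum>j\<le>Suc (Suc n). (-1) ^ j * F i j))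
        = (\<Sum>i\<le>n. (-1) ^ i * (\<Sum>j\<le>Suc (Suc n). (-1) ^ j * F i j))
          + (-1) ^ Suc n * (\<Sum>j\<le>Suc (Suc n). (-1) ^ j * F (Suc n) j)"
      by (rule sum.atMost_Suc)
    then show ?thesis
      unfolding rows last_row by (simp add: ring_distribs power_Suc del: sum.atMost_Suc)
  qed
  have step_G: "(\<Sum>j\<le>Suc n. (-1) ^ j * (\<Sum>i<Suc n. (-1) ^ i * G i j))
      = (\<Sum>j\<le>n. (-1) ^ j * (\<Sum>i<n. (-1) ^ i * G i j)) + (-1) ^ n * (\<Sum>j\<le>n. (-1) ^ j * G n j)
        - (\<Sum>i\<le>n. (-1) ^ i * (-1) ^ n * G i (Suc n))"
    by (simp add: sum.distrib ring_distribs lessThan_Suc_atMost[symmetric] sum_distrib_left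
        mult.assoc mult.left_commute sum_negf[symmetric])
  show ?case
    unfolding step_F step_G using IH by (simp add: algebra_simps del: sum.atMost_Suc)
qed simp

definition bar_homotopy :: "('a \<Rightarrow> 'a) \<Rightarrow> 'a \<Rightarrow> 'x \<times> 'a list \<times> 'y \<Rightarrow> 'x \<times> 'a list \<times> 'y \<Rightarrow> 'k::field" where
  "bar_homotopy c u b = (\<lambda>g. \<Sum>i\<le>length (fst (snd b)). (-1) ^ i * kdelta (bar_shift c u i b) g)"

lemma finsupp_bar_homotopy: "finsupp (bar_homotopy c u b)"
  unfolding bar_homotopy_def by (intro finsupp_sum finsupp_scale finsupp_kdelta) simp

lemma bar_d_bar_homotopy:
  "lin_ext (bar_d_basis m r l) (bar_homotopy c u (x, as, y))
    = (\<lambda>g. \<Sum>i\<le>length as. (-1) ^ i *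
         (\<Sum>j\<le>Suc (length as). (-1) ^ j * kdelta (bar_face m r l j (bar_shift c u i (x, as, y))) g))"
proof -
  have "lin_ext (bar_d_basis m r l) (bar_homotopy c u (x, as, y))
      = (\<lambda>g. \<Sum>i\<le>length as. lin_ext (bar_d_basis m r l) (\<lambda>g. (-1) ^ i * kdelta (bar_shift c u i (x, as, y)) g) g)"
    unfolding bar_homotopy_def by (subst lin_ext_sum) (auto intro: finsupp_scale finsupp_kdelta)
  also have "\<dots> = (\<lambda>g. \<Sum>i\<le>length as. (-1) ^ i * bar_d_basis m r l (bar_shift c u i (x, as, y)) g)"
    by (simp add: lin_ext_scale finsupp_kdelta lin_ext_kdelta)
  finally show ?thesis
    by (simp only: bar_shift_simp bar_d_basis_eq_faces[OF bar_insert_not_Nil] length_bar_insert)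
qed

lemma bar_homotopy_bar_d:
  "lin_ext (bar_homotopy c u) (bar_d_basis m r l (x, as, y))
    = (\<lambda>g. \<Sum>j\<le>length as. (-1) ^ j *
         (\<Sum>i<length as. (-1) ^ i * kdelta (bar_shift c u i (bar_face m r l j (x, as, y))) g))"
proof (cases "as = []")
  case True then show ?thesis by (simp add: bar_d_basis_Nil lin_ext_zero)
next
  case False
  have range: "{..length as - 1} = {..<length as}" using False by (cases as) auto
  have "lin_ext (bar_homotopy c u) (bar_d_basis m r l (x, as, y))
      = (\<lambda>g. \<Sum>j\<le>length as. lin_ext (bar_homotopy c u) (\<lambda>g. (-1) ^ j * kdelta (bar_face m r l j (x, as, y)) g) g)"
    unfolding bar_d_basis_eq_faces[OF False] by (subst lin_ext_sum) (auto intro: finsupp_scale finsupp_kdelta)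
  also have "\<dots> = (\<lambda>g. \<Sum>j\<le>length as. (-1) ^ j * bar_homotopy c u (bar_face m r l j (x, as, y)) g)"
    by (simp add: lin_ext_scale finsupp_kdelta lin_ext_kdelta)
  also have "\<dots> = (\<lambda>g. \<Sum>j\<le>length as. (-1) ^ j *
         (\<Sum>i<length as. (-1) ^ i * kdelta (bar_shift c u i (bar_face m r l j (x, as, y))) g))"
    using False range by (simp add: bar_homotopy_def length_bar_face)
  finally show ?thesis .
qed

lemma bar_homotopy_basis_identity:
  assumes mult: "\<And>a b. m (c a) (c b) = c (m a b)"
    and mult_u: "\<And>a. m (c a) u = c a" and u_mult: "\<And>a. m u a = c a"
    and ract_u: "\<And>x. r x u = x" and ract: "\<And>x a. r x (c a) = r x a" and lact_u: "\<And>y. l u y = y"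
  shows "lin_ext (bar_d_basis m r l) (bar_homotopy c u b) g + lin_ext (bar_homotopy c u) (bar_d_basis m r l b) g
     = kdelta b g - (kdelta (bar_map c b) g :: 'k::field)"
proof -
  obtain x as y where b: "b = (x, as, y)" by (cases b)
  define F where "F i j = (kdelta (bar_face m r l j (bar_shift c u i b)) g :: 'k)" for i j
  define G where "G i j = (kdelta (bar_shift c u i (bar_face m r l j b)) g :: 'k)" for i j
  define A where "A i = (kdelta (x, map c (take i as) @ drop i as, y) g :: 'k)" for i
  have "(\<Sum>i\<le>length as. (-1) ^ i * (\<Sum>j\<le>Suc (length as). (-1) ^ j * F i j))
      + (\<Sum>j\<le>length as. (-1) ^ j * (\<Sum>i<length as. (-1) ^ i * G i j)) = A 0 - A (Suc (length as))"
  proof (rule alternating_double_sum_telescope)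
    show "\<forall>i\<le>length as. \<forall>j<i. F i j = G (i - 1) j"
      unfolding F_def G_def b
      by (auto simp del: bar_shift_simp
          simp: bar_face_bar_shift_below[where m = m and c = c and r = r, OF mult ract])
    show "\<forall>i\<le>length as. F i i = A i"
      unfolding F_def A_def b
      by (auto simp del: bar_shift_simp
          simp: bar_face_bar_shift_same[where m = m and c = c and r = r, OF mult_u ract_u])
    show "\<forall>i\<le>length as. F i (Suc i) = A (Suc i)"
      unfolding F_def A_def b
      by (auto simp del: bar_shift_simp
          simp: bar_face_Suc_bar_shift_same[where m = m and c = c and l = l, OF u_mult lact_u])
    show "\<forall>i\<le>length as. \<forall>j. Suc i < j \<and> j \<le> Suc (length as) \<longrightarrow> F i j = G i (j - 1)"
      unfolding F_def G_def b by (auto simp del: bar_shift_simp simp: bar_face_bar_shift_above)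
  qed
  then show ?thesis
    unfolding b bar_d_bar_homotopy bar_homotopy_bar_d
    by (simp add: F_def G_def A_def b)
qed

lemma bar_homotopy_identity:
  assumes mult: "\<And>a b. m (c a) (c b) = c (m a b)"
    and mult_u: "\<And>a. m (c a) u = c a" and u_mult: "\<And>a. m u a = c a"
    and ract_u: "\<And>x. r x u = x" and ract: "\<And>x a. r x (c a) = r x a" and lact_u: "\<And>y. l u y = y"
    and f: "finsupp (f :: _ \<Rightarrow> 'k::field)"
  shows "(\<lambda>g. lin_ext (bar_d_basis m r l) (lin_ext (bar_homotopy c u) f) g
              + lin_ext (bar_homotopy c u) (lin_ext (bar_d_basis m r l) f) g)
     = (\<lambda>g. f g - lin_map (bar_map c) f g)"
proof -
  have "(\<lambda>g. lin_ext (bar_d_basis m r l) (lin_ext (bar_homotopy c u) f) g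
          + lin_ext (bar_homotopy c u) (lin_ext (bar_d_basis m r l) f) g)
      = lin_ext (\<lambda>b g. lin_ext (bar_d_basis m r l) (bar_homotopy c u b) g
          + lin_ext (bar_homotopy c u) (bar_d_basis m r l b) g) f"
    by (simp add: lin_ext_lin_ext[OF f finsupp_bar_homotopy]
        lin_ext_lin_ext[OF f finsupp_bar_d_basis] lin_ext_kernel_add)
  also have "\<dots> = lin_ext (\<lambda>b g. kdelta b g - kdelta (bar_map c b) g) f"
    by (simp add: bar_homotopy_basis_identity[where m = m and c = c and u = u and r = r and l = l, OF assms(1-6)])
  also have "\<dots> = (\<lambda>g. f g - lin_map (bar_map c) f g)"
    by (simp add: lin_ext_kernel_diff lin_ext_kdelta_self[OF f] lin_map_def)
  finally show ?thesis .
qed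

lemma bar_homotopy_in_bar_chains:
  assumes f: "f \<in> bar_chains n"
  shows "lin_ext (bar_homotopy c u) (f :: _ \<Rightarrow> 'k::field) \<in> bar_chains (Suc n)"
proof (rule lin_ext_in_bar_chains)
  show "finsupp f" using f by (rule finsupp_bar_chains)
  fix b assume "f b \<noteq> 0"
  then obtain x as y where "b = (x, as, y)" "length as = n"
    using f by (cases b) (auto simp: bar_chains_iff)
  then show "bar_homotopy c u b \<in> bar_chains (Suc n)"
    unfolding bar_homotopy_def by (auto intro!: bar_chains_sum bar_chains_scale kdelta_in_bar_chains)
qed

lemma bar_homotopy_eq_sum_shifts:
  assumes f: "f \<in> bar_chains n"
  shows "lin_ext (bar_homotopy c u) (f :: _ \<Rightarrow> 'k::field)
    = (\<lambda>g. \<Sum>i\<le>n. (-1) ^ i * lin_map (bar_shift c u i) f g)"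
proof -
  have "lin_ext (bar_homotopy c u) f = lin_ext (\<lambda>b g. \<Sum>i\<le>n. (-1) ^ i * kdelta (bar_shift c u i b) g) f"
  proof (rule lin_ext_cong)
    fix b assume "f b \<noteq> 0"
    then have "length (fst (snd b)) = n" using f unfolding bar_chains_iff by blast
    then show "bar_homotopy c u b = (\<lambda>g. \<Sum>i\<le>n. (-1) ^ i * kdelta (bar_shift c u i b) g)"
      unfolding bar_homotopy_def by simp
  qed
  also have "\<dots> = (\<lambda>g. \<Sum>i\<le>n. (-1) ^ i * lin_map (bar_shift c u i) f g)"
    unfolding lin_map_def lin_ext_def
    by (simp add: sum_distrib_left mult.left_commute sum.swap[where A = "{b. f b \<noteq> 0}"])
  finally show ?thesis .
qed

lemma bar_homotopy_kspan:
  assumes add: "\<And>a b. c (add a b) = add (c a) (c b)" and scale: "\<And>k a. c (s k a) = s k (c a)"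
    and t: "t \<in> kspan (bar_rel_gens add s one r l n)"
  shows "lin_ext (bar_homotopy c u) (t :: _ \<Rightarrow> 'k::field) \<in> kspan (bar_rel_gens add s one r l (Suc n))"
proof (rule lin_ext_kspan[OF finsupp_bar_rel_gens _ t])
  fix g assume g: "g \<in> bar_rel_gens add s one r l n"
  have shift: "lin_map (bar_shift c u i) g \<in> bar_rel_gens add s one r l (Suc n)" if "i \<le> n" for i
    by (rule lin_map_bar_rel_gens[where L = "bar_insert c u i" and \<kappa> = "\<lambda>k. if k < i then k else Suc k"
          and \<nu> = "\<lambda>k v. if k < i then c v else v", OF _ _ _ _ _ _ _ _ g])
      (simp_all add: bar_insert_update add scale)
  show "lin_ext (bar_homotopy c u) g \<in> kspan (bar_rel_gens add s one r l (Suc n))"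
    unfolding bar_homotopy_eq_sum_shifts[OF bar_rel_gens_in_bar_chains[OF g]]
    by (intro kspan_sum kspan_scale kspan_base shift) simp_all
qed

lemma bar_boundaries_iff:
  "z \<in> bar_boundaries add m s one r l n \<longleftrightarrow> (\<exists>h t. z = (\<lambda>g. lin_ext (bar_d_basis m r l) h g + t g)
     \<and> h \<in> bar_chains (Suc n) \<and> t \<in> kspan (bar_rel_gens add s one r l n))"
  unfolding bar_boundaries_def by blast

lemma zero_in_bar_boundaries: "(\<lambda>_. 0 :: 'k::field) \<in> bar_boundaries add m s one r l n"
  unfolding bar_boundaries_iff
  by (intro exI[of _ "\<lambda>_. 0"] conjI zero_in_bar_chains kspan.zero) (simp add: lin_ext_zero)

lemma bar_boundaries_add:
  assumes "z \<in> bar_boundaries add m s one r l n" "z' \<in> bar_boundaries add m s one r l n"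
  shows "(\<lambda>g. z g + z' g :: 'k::field) \<in> bar_boundaries add m s one r l n"
proof -
  obtain h t h' t' where z: "z = (\<lambda>g. lin_ext (bar_d_basis m r l) h g + t g)"
    and z': "z' = (\<lambda>g. lin_ext (bar_d_basis m r l) h' g + t' g)"
    and h: "h \<in> bar_chains (Suc n)" "h' \<in> bar_chains (Suc n)"
    and t: "t \<in> kspan (bar_rel_gens add s one r l n)" "t' \<in> kspan (bar_rel_gens add s one r l n)"
    using assms unfolding bar_boundaries_iff by blast
  have "(\<lambda>g. z g + z' g) = (\<lambda>g. lin_ext (bar_d_basis m r l) (\<lambda>b. h b + h' b) g + (t g + t' g))"
    unfolding z z' by (simp add: lin_ext_add finsupp_bar_chains[OF h(1)] finsupp_bar_chains[OF h(2)] add_ac)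
  then show ?thesis
    unfolding bar_boundaries_iff using bar_chains_add[OF h] kspan_add[OF t] by fast
qed

text \<open>A map of letters need not preserve the unit (the inclusion of \<open>P\<close> into the cylinder does
  not): only the relations of the bar complex that involve the unit have to correspond.\<close>

definition bar_hom ::
  "('a \<Rightarrow> 'a \<Rightarrow> 'a) \<Rightarrow> ('a \<Rightarrow> 'a \<Rightarrow> 'a) \<Rightarrow> ('k \<Rightarrow> 'a \<Rightarrow> 'a) \<Rightarrow> 'a \<Rightarrow> ('x \<Rightarrow> 'a \<Rightarrow> 'x) \<Rightarrow> ('a \<Rightarrow> 'y \<Rightarrow> 'y)
    \<Rightarrow> ('b \<Rightarrow> 'b \<Rightarrow> 'b) \<Rightarrow> ('b \<Rightarrow> 'b \<Rightarrow> 'b) \<Rightarrow> ('k \<Rightarrow> 'b \<Rightarrow> 'b) \<Rightarrow> 'b \<Rightarrow> ('x \<Rightarrow> 'b \<Rightarrow> 'x) \<Rightarrow> ('b \<Rightarrow> 'y \<Rightarrow> 'y)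
    \<Rightarrow> ('a \<Rightarrow> 'b) \<Rightarrow> bool" where
  "bar_hom addA mA sA oneA rA lA addB mB sB oneB rB lB F \<longleftrightarrow>
     (\<forall>a b. F (addA a b) = addB (F a) (F b)) \<and> (\<forall>c a. F (sA c a) = sB c (F a)) \<and>
     (\<forall>a b. F (mA a b) = mB (F a) (F b)) \<and>
     (\<forall>x a. rB x (F a) = rA x a) \<and> (\<forall>a y. lB (F a) y = lA a y) \<and>
     (\<forall>x c. rA x (sA c oneA) = rB x (sB c oneB)) \<and> (\<forall>c y. lA (sA c oneA) y = lB (sB c oneB) y)"

lemma lin_map_bar_map_kspan:
  assumes F: "bar_hom addA mA sA oneA rA lA addB mB sB oneB rB lB F"
    and t: "t \<in> kspan (bar_rel_gens addA sA oneA rA lA n)"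
  shows "lin_map (bar_map F) (t :: _ \<Rightarrow> 'k::field) \<in> kspan (bar_rel_gens addB sB oneB rB lB n)"
proof (rule lin_map_kspan[OF finsupp_bar_rel_gens _ t])
  fix g assume "g \<in> bar_rel_gens addA sA oneA rA lA n"
  then have "lin_map (bar_map F) g \<in> bar_rel_gens addB sB oneB rB lB n"
    by (rule lin_map_bar_rel_gens[where L = "map F" and \<kappa> = "\<lambda>k. k" and \<nu> = "\<lambda>k. F", rotated -1])
      (use F in \<open>simp_all add: bar_hom_def map_update\<close>)
  then show "lin_map (bar_map F) g \<in> kspan (bar_rel_gens addB sB oneB rB lB n)"
    by (rule kspan_base)
qed

lemma lin_map_bar_cycles:
  assumes F: "bar_hom addA mA sA oneA rA lA addB mB sB oneB rB lB F"
    and w: "w \<in> bar_cycles addA mA sA oneA rA lA n"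
  shows "lin_map (bar_map F) (w :: _ \<Rightarrow> 'k::field) \<in> bar_cycles addB mB sB oneB rB lB n"
proof -
  have w_chain: "w \<in> bar_chains n" using w by (simp add: bar_cycles_def)
  have "lin_ext (bar_d_basis mB rB lB) (lin_map (bar_map F) w) \<in> kspan (bar_rel_gens addB sB oneB rB lB m)"
    if "n = Suc m" for m
  proof -
    have "lin_ext (bar_d_basis mA rA lA) w \<in> kspan (bar_rel_gens addA sA oneA rA lA m)"
      using w that by (simp add: bar_cycles_def)
    then show ?thesis
      using F lin_map_bar_map_kspan[OF F] finsupp_bar_chains[OF w_chain]
      by (simp add: bar_d_lin_map[where rA = rA and lA = lA and mA = mA] bar_hom_def)
  qed
  moreover have "lin_map (bar_map F) w \<in> bar_chains n"
    by (rule lin_map_bar_map_in_bar_chains[OF w_chain])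
  ultimately show ?thesis unfolding bar_cycles_def by (auto split: nat.split)
qed

lemma lin_map_bar_boundaries:
  assumes F: "bar_hom addA mA sA oneA rA lA addB mB sB oneB rB lB F"
    and z: "z \<in> bar_boundaries addA mA sA oneA rA lA n"
  shows "lin_map (bar_map F) (z :: _ \<Rightarrow> 'k::field) \<in> bar_boundaries addB mB sB oneB rB lB n"
proof -
  obtain h t where z: "z = (\<lambda>g. lin_ext (bar_d_basis mA rA lA) h g + t g)"
    and h: "h \<in> bar_chains (Suc n)" and t: "t \<in> kspan (bar_rel_gens addA sA oneA rA lA n)"
    using z unfolding bar_boundaries_iff by blast
  have "lin_map (bar_map F) z
      = (\<lambda>g. lin_ext (bar_d_basis mB rB lB) (lin_map (bar_map F) h) g + lin_map (bar_map F) t g)"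
    using F finsupp_kspan[OF finsupp_bar_rel_gens t] finsupp_bar_chains[OF h]
    by (simp add: z lin_map_add finsupp_lin_ext finsupp_bar_d_basis
        bar_d_lin_map[where rA = rA and lA = lA and mA = mA] bar_hom_def)
  then show ?thesis
    unfolding bar_boundaries_iff
    using lin_map_bar_map_in_bar_chains[OF h] lin_map_bar_map_kspan[OF F t] by fast
qed

lemma bar_cycle_minus_lin_map_in_bar_boundaries:
  assumes add: "\<And>a b. c (add a b) = add (c a) (c b)" and scale: "\<And>k a. c (s k a) = s k (c a)"
    and mult: "\<And>a b. m (c a) (c b) = c (m a b)"
    and mult_u: "\<And>a. m (c a) u = c a" and u_mult: "\<And>a. m u a = c a"
    and ract_u: "\<And>x. r x u = x" and ract: "\<And>x a. r x (c a) = r x a" and lact_u: "\<And>y. l u y = y"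
    and w: "w \<in> bar_cycles add m s one r l n"
  shows "(\<lambda>g. w g - lin_map (bar_map c) w g :: 'k::field) \<in> bar_boundaries add m s one r l n"
proof -
  let ?d = "lin_ext (bar_d_basis m r l)" and ?H = "lin_ext (bar_homotopy c u)"
  have w_chain: "w \<in> bar_chains n" using w by (simp add: bar_cycles_def)
  have "?H (?d w) \<in> kspan (bar_rel_gens add s one r l n)"
  proof (cases n)
    case 0
    then show ?thesis
      using w_chain by (simp add: bar_d_bar_chains_0 lin_ext_zero kspan.zero)
  next
    case (Suc n')
    then have "?d w \<in> kspan (bar_rel_gens add s one r l n')"
      using w by (simp add: bar_cycles_def)
    then show ?thesis
      unfolding Suc by (rule bar_homotopy_kspan[where c = c and add = add and s = s, OF add scale])
  qed
  moreover have "(\<lambda>g. w g - lin_map (bar_map c) w g) = (\<lambda>g. ?d (?H w) g + ?H (?d w) g)"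
    using bar_homotopy_identity[where m = m and c = c and u = u and r = r and l = l,
        OF mult mult_u u_mult ract_u ract lact_u finsupp_bar_chains[OF w_chain]] by (rule sym)
  ultimately show ?thesis
    unfolding bar_boundaries_iff
    by (intro exI[of _ "?H w"] exI[of _ "?H (?d w)"] conjI bar_homotopy_in_bar_chains[OF w_chain])
qed

section \<open>Invariance of Tor under retractions\<close>

lemma quot_iso_of_homotopy_equivalence:
  fixes F :: "('b \<Rightarrow> 'k::field) \<Rightarrow> 'c \<Rightarrow> 'k" and G :: "('c \<Rightarrow> 'k) \<Rightarrow> 'b \<Rightarrow> 'k"
  assumes F_add: "\<And>u v. u \<in> Z1 \<Longrightarrow> v \<in> Z1 \<Longrightarrow> F (\<lambda>g. u g + v g) = (\<lambda>g. F u g + F v g)"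
    and F_scale: "\<And>c u. u \<in> Z1 \<Longrightarrow> F (\<lambda>g. c * u g) = (\<lambda>g. c * F u g)"
    and F_Z: "\<And>w. w \<in> Z1 \<Longrightarrow> F w \<in> Z2" and F_B: "\<And>w. w \<in> B1 \<Longrightarrow> F w \<in> B2"
    and G_Z: "\<And>z. z \<in> Z2 \<Longrightarrow> G z \<in> Z1" and G_B: "\<And>z. z \<in> B2 \<Longrightarrow> G z \<in> B1"
    and FG: "\<And>z. z \<in> Z2 \<Longrightarrow> F (G z) = z"
    and GF: "\<And>w. w \<in> Z1 \<Longrightarrow> (\<lambda>g. w g - G (F w) g) \<in> B1"
    and zero: "(\<lambda>_. 0) \<in> B2"
    and B_add: "\<And>u v. u \<in> B1 \<Longrightarrow> v \<in> B1 \<Longrightarrow> (\<lambda>g. u g + v g) \<in> B1"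
  shows "quot_iso Z1 B1 Z2 B2"
  unfolding quot_iso_def
proof (intro exI[of _ F] conjI ballI allI impI subsetI)
  show "F (\<lambda>g. u g + v g) = (\<lambda>g. F u g + F v g)" if "u \<in> Z1" "v \<in> Z1" for u v
    using that by (rule F_add)
  show "F (\<lambda>g. c * u g) = (\<lambda>g. c * F u g)" if "u \<in> Z1" for c u
    using that by (rule F_scale)
  show "z \<in> Z2" if "z \<in> F ` Z1" for z
    using that F_Z by blast
  show "z \<in> B2" if "z \<in> F ` B1" for z
    using that F_B by blast
  show "\<exists>w\<in>Z1. (\<lambda>g. z g - F w g) \<in> B2" if "z \<in> Z2" for z
    using that zero by (intro bexI[of _ "G z"] G_Z) (simp_all add: FG)
  show "w \<in> B1" if "w \<in> Z1" "F w \<in> B2" for w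
  proof -
    have "(\<lambda>g. (w g - G (F w) g) + G (F w) g) \<in> B1"
      using GF[OF that(1)] G_B[OF that(2)] by (rule B_add)
    then show ?thesis by simp
  qed
qed

lemma Tor_iso_of_retraction:
  fixes \<pi> :: "'a \<Rightarrow> 'b" and \<iota> :: "'b \<Rightarrow> 'a" and sA :: "'k::field \<Rightarrow> 'a \<Rightarrow> 'a"
    and rA :: "'x::ab_group_add \<Rightarrow> 'a \<Rightarrow> 'x" and lA :: "'a \<Rightarrow> 'y::ab_group_add \<Rightarrow> 'y"
  assumes \<pi>: "bar_hom addA mA sA oneA rA lA addB mB sB oneB rB lB \<pi>"
    and \<iota>: "bar_hom addB mB sB oneB rB lB addA mA sA oneA rA lA \<iota>"
    and retract: "\<And>b. \<pi> (\<iota> b) = b"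
    and u_mult: "\<And>a. mA u a = \<iota> (\<pi> a)" and mult_u: "\<And>b. mA (\<iota> b) u = \<iota> b"
    and ract_u: "\<And>x. rA x u = x" and lact_u: "\<And>y. lA u y = y"
  shows "Tor_iso addA mA sA oneA rA lA addB mB sB oneB rB lB n"
proof -
  have finsupp_cycles: "finsupp w" if "w \<in> bar_cycles add m s one r l n" for w :: "_ \<Rightarrow> 'k" and add m s one r l
    using that finsupp_bar_chains by (auto simp: bar_cycles_def)
  show ?thesis
    unfolding Tor_iso_def
  proof (rule quot_iso_of_homotopy_equivalence[where F = "lin_map (bar_map \<pi>)" and G = "lin_map (bar_map \<iota>)"])
    fix w assume w: "w \<in> bar_cycles addA mA sA oneA rA lA n"
    have "(\<lambda>g. w g - lin_map (bar_map (\<lambda>a. \<iota> (\<pi> a))) w g) \<in> bar_boundaries addA mA sA oneA rA lA n"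
      using \<pi> \<iota> w by (intro bar_cycle_minus_lin_map_in_bar_boundaries[where u = u])
        (simp_all add: bar_hom_def u_mult mult_u ract_u lact_u)
    then show "(\<lambda>g. w g - lin_map (bar_map \<iota>) (lin_map (bar_map \<pi>) w) g) \<in> bar_boundaries addA mA sA oneA rA lA n"
      using finsupp_cycles[OF w] by (simp add: lin_map_comp)
  qed (simp_all add: lin_map_add lin_map_scale lin_map_comp lin_map_id retract finsupp_cycles
      lin_map_bar_cycles[OF \<pi>] lin_map_bar_boundaries[OF \<pi>] lin_map_bar_cycles[OF \<iota>]
      lin_map_bar_boundaries[OF \<iota>] zero_in_bar_boundaries bar_boundaries_add)
qed

section \<open>The mapping cylinder\<close>

lemma additive_zero:
  fixes f :: "'a::monoid_add \<Rightarrow> 'b::ab_group_add"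
  assumes "\<And>a b. f (a + b) = f a + f b"
  shows "f 0 = 0"
proof -
  have "f (0 + 0) = f 0 + f 0" by (rule assms)
  then show ?thesis by simp
qed

lemma k_algebra_scale_add: "is_k_algebra s \<Longrightarrow> s c (a + b) = s c a + s c b"
  by (simp add: is_k_algebra_def vector_space_def)

lemma k_algebra_scale_zero: "is_k_algebra s \<Longrightarrow> s c 0 = 0"
  by (rule additive_zero[of "s c"]) (rule k_algebra_scale_add)

lemma unital_alg_hom_zero: "is_unital_alg_hom sQ sP \<phi> \<Longrightarrow> \<phi> 0 = 0"
  by (rule additive_zero[of \<phi>]) (simp add: is_unital_alg_hom_def)

lemma right_module_zero: "is_right_module act \<Longrightarrow> act x 0 = 0"
  by (rule additive_zero[of "act x"]) (simp add: is_right_module_def)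

lemma left_module_zero: "is_left_module act \<Longrightarrow> act 0 y = 0"
  by (rule additive_zero[of "\<lambda>a. act a y"]) (simp add: is_left_module_def)

definition cyl_proj :: "('q \<Rightarrow> 'p) \<Rightarrow> 'p \<times> 'q \<Rightarrow> 'p::ring_1" where
  "cyl_proj \<phi> z = fst z + \<phi> (snd z)"

definition cyl_incl :: "'p \<Rightarrow> 'p \<times> 'q::ring_1" where
  "cyl_incl p = (p, 0)"

lemma cyl_proj_bar_hom:
  fixes \<phi> :: "'q::ring_1 \<Rightarrow> 'p::ring_1"
  assumes sP: "is_k_algebra sP" and \<phi>: "is_unital_alg_hom sQ sP \<phi>"
    and X: "is_right_module actX" and Y: "is_left_module actY"
  shows "bar_hom cyl_add (cyl_mult \<phi>) (cyl_scale sP sQ) cyl_one (cyl_ract \<phi> actX) (cyl_lact \<phi> actY)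
           (+) (*) sP 1 actX actY (cyl_proj \<phi>)"
proof -
  have \<phi>_add: "\<phi> (a + b) = \<phi> a + \<phi> b" and \<phi>_mult: "\<phi> (a * b) = \<phi> a * \<phi> b"
    and \<phi>_scale: "\<phi> (sQ c a) = sP c (\<phi> a)" and \<phi>_one: "\<phi> 1 = 1" for a b c
    using \<phi> by (simp_all add: is_unital_alg_hom_def)
  have X_add: "actX x (a + b) = actX x a + actX x b" and Y_add: "actY (a + b) y = actY a y + actY b y"
    for x y a b
    using X Y by (simp_all add: is_right_module_def is_left_module_def)
  note zeros = unital_alg_hom_zero[OF \<phi>] k_algebra_scale_zero[OF sP]
    right_module_zero[OF X] left_module_zero[OF Y]
  show ?thesis
    unfolding bar_hom_def cyl_proj_def
  proof (intro conjI allI)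
    fix a b :: "'p \<times> 'q" and c x y
    show "fst (cyl_add a b) + \<phi> (snd (cyl_add a b)) = fst a + \<phi> (snd a) + (fst b + \<phi> (snd b))"
      by (simp add: cyl_add_def \<phi>_add add_ac)
    show "fst (cyl_scale sP sQ c a) + \<phi> (snd (cyl_scale sP sQ c a)) = sP c (fst a + \<phi> (snd a))"
      by (simp add: cyl_scale_def \<phi>_scale k_algebra_scale_add[OF sP])
    show "fst (cyl_mult \<phi> a b) + \<phi> (snd (cyl_mult \<phi> a b)) = (fst a + \<phi> (snd a)) * (fst b + \<phi> (snd b))"
      by (simp add: cyl_mult_def \<phi>_mult ring_distribs add_ac)
    show "actX x (fst a + \<phi> (snd a)) = cyl_ract \<phi> actX x a"
      by (simp add: cyl_ract_def X_add)
    show "actY (fst a + \<phi> (snd a)) y = cyl_lact \<phi> actY a y"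
      by (simp add: cyl_lact_def Y_add)
    show "cyl_ract \<phi> actX x (cyl_scale sP sQ c cyl_one) = actX x (sP c 1)"
      by (simp add: cyl_ract_def cyl_scale_def cyl_one_def \<phi>_scale \<phi>_one zeros)
    show "cyl_lact \<phi> actY (cyl_scale sP sQ c cyl_one) y = actY (sP c 1) y"
      by (simp add: cyl_lact_def cyl_scale_def cyl_one_def \<phi>_scale \<phi>_one zeros)
  qed
qed

lemma cyl_incl_bar_hom:
  assumes sP: "is_k_algebra sP" and sQ: "is_k_algebra sQ" and \<phi>: "is_unital_alg_hom sQ sP \<phi>"
    and X: "is_right_module actX" and Y: "is_left_module actY"
  shows "bar_hom (+) (*) sP 1 actX actY
           cyl_add (cyl_mult \<phi>) (cyl_scale sP sQ) cyl_one (cyl_ract \<phi> actX) (cyl_lact \<phi> actY) cyl_incl"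
proof -
  have "cyl_ract \<phi> actX x (cyl_scale sP sQ c cyl_one) = actX x (sP c 1)"
    and "cyl_lact \<phi> actY (cyl_scale sP sQ c cyl_one) y = actY (sP c 1) y" for x y c
    using cyl_proj_bar_hom[OF sP \<phi> X Y] unfolding bar_hom_def by auto
  moreover note unital_alg_hom_zero[OF \<phi>] k_algebra_scale_zero[OF sQ]
    right_module_zero[OF X] left_module_zero[OF Y]
  ultimately show ?thesis
    by (simp add: bar_hom_def cyl_incl_def cyl_add_def cyl_mult_def cyl_scale_def cyl_ract_def cyl_lact_def)
qed

theorem proposition1p1:
  fixes sP :: "'k::field \<Rightarrow> 'p::ring_1 \<Rightarrow> 'p"
    and sQ :: "'k \<Rightarrow> 'q::ring_1 \<Rightarrow> 'q"
    and \<phi> :: "'q \<Rightarrow> 'p"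
    and actX :: "'x::ab_group_add \<Rightarrow> 'p \<Rightarrow> 'x"
    and actY :: "'p \<Rightarrow> 'y::ab_group_add \<Rightarrow> 'y"
    and n :: nat
  assumes "is_k_algebra sP" and "is_k_algebra sQ"
    and "is_unital_alg_hom sQ sP \<phi>"
    and "is_right_module actX" and "is_left_module actY"
  shows "Tor_iso (cyl_add :: 'p \<times> 'q \<Rightarrow> _) (cyl_mult \<phi>) (cyl_scale sP sQ) cyl_one
                 (cyl_ract \<phi> actX) (cyl_lact \<phi> actY)
                 (+) (*) sP 1 actX actY n"
proof (rule Tor_iso_of_retraction[where u = "(1, 0)"])
  show "bar_hom cyl_add (cyl_mult \<phi>) (cyl_scale sP sQ) cyl_one (cyl_ract \<phi> actX) (cyl_lact \<phi> actY)
          (+) (*) sP 1 actX actY (cyl_proj \<phi>)"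
    using assms(1,3-5) by (rule cyl_proj_bar_hom)
  show "bar_hom (+) (*) sP 1 actX actY
          cyl_add (cyl_mult \<phi>) (cyl_scale sP sQ) cyl_one (cyl_ract \<phi> actX) (cyl_lact \<phi> actY) cyl_incl"
    using assms by (rule cyl_incl_bar_hom)
  have "\<phi> 0 = 0" using assms(3) by (rule unital_alg_hom_zero)
  then show "cyl_proj \<phi> (cyl_incl p) = p"
    and "cyl_mult \<phi> (1, 0) z = cyl_incl (cyl_proj \<phi> z)"
    and "cyl_mult \<phi> (cyl_incl p) (1, 0) = cyl_incl p"
    and "cyl_ract \<phi> actX x (1, 0) = x" and "cyl_lact \<phi> actY (1, 0) y = y"
    for p z x y
    using assms(4,5) right_module_zero[OF assms(4)] left_module_zero[OF assms(5)]
    by (auto simp: cyl_proj_def cyl_incl_def cyl_mult_def cyl_ract_def cyl_lact_def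
        is_right_module_def is_left_module_def)
qed

end
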